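(* (a) Let $k\ge 4$ be even and let $C_k=v_1v_2\cdots v_kv_1$. For every homomorphism $g$ from $\bar C_k$ to $\bar C_k$ that is not surjective on vertices, there are two distinct vertices $x\ne y$ with $g(x)=g(y)\in\{v_1,v_k\}$. (b) Let $k\ge 4$ and $P_k=v_1v_2\cdots v_k$. For every homomorphism $g$ from $\bar P_k$ to $\bar P_k$ that is not surjective on vertices, there are two distinct vertices $x\ne y$ with $g(x)=g(y)\in\{v_1,v_k\}$.
   Context: $\bar F$ denotes the complement of $F$. A homomorphism $F\to F'$ is a map $V(F)\to V(F')$ sending edges to edges. *)

theory Defs
  imports Main
begin

text \<open>Vertices v_1..v_k are represented by the naturals 1..k.\<close>

definition path_adj :: "nat \<Rightarrow> nat \<Rightarrow> nat \<Rightarrow> bool" where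
  "path_adj k i j \<longleftrightarrow> i \<in> {1..k} \<and> j \<in> {1..k} \<and> (j = i + 1 \<or> i = j + 1)"

definition cycle_adj :: "nat \<Rightarrow> nat \<Rightarrow> nat \<Rightarrow> bool" where
  "cycle_adj k i j \<longleftrightarrow> path_adj k i j \<or> (i = 1 \<and> j = k) \<or> (i = k \<and> j = 1)"

definition compl_adj :: "nat \<Rightarrow> (nat \<Rightarrow> nat \<Rightarrow> bool) \<Rightarrow> nat \<Rightarrow> nat \<Rightarrow> bool" where
  "compl_adj k E i j \<longleftrightarrow> i \<in> {1..k} \<and> j \<in> {1..k} \<and> i \<noteq> j \<and> \<not> E i j"

definition is_hom :: "nat set \<Rightarrow> (nat \<Rightarrow> nat \<Rightarrow> bool) \<Rightarrow> nat set \<Rightarrow> (nat \<Rightarrow> nat \<Rightarrow> bool) \<Rightarrow> (nat \<Rightarrow> nat) \<Rightarrow> bool" where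
  "is_hom V E W F g \<longleftrightarrow> g ` V \<subseteq> W \<and> (\<forall>x\<in>V. \<forall>y\<in>V. E x y \<longrightarrow> F (g x) (g y))"

end

theory Submission
  imports Defs
begin

text \<open>
  Let \<open>G\<close> be triangle-free and \<open>g\<close> an endomorphism of its complement. Two distinct vertices
  with the same image are non-adjacent in the complement, hence adjacent in \<open>G\<close>; so every fibre
  of \<open>g\<close> has at most two elements and \<open>g\<close> misses at most as many vertices as it has doubled
  values. A \<open>G\<close>-neighbour of a doubled value is never hit, since its preimage would form a
  triangle with the two preimages of that value. If \<open>G\<close> contains the path \<open>v\<^sub>1 \<dots> v\<^sub>k\<close>, \<open>g\<close>
  is not surjective and no doubled value were an end vertex, then the left neighbours of the
  doubled values together with the right neighbour of the largest one would be more missed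
  vertices than there are doubled values.
\<close>

definition collision_values :: "('a \<Rightarrow> 'b) \<Rightarrow> 'a set \<Rightarrow> 'b set" where
  "collision_values g V = {w. \<exists>a\<in>V. \<exists>b\<in>V. a \<noteq> b \<and> g a = w \<and> g b = w}"

lemma collision_values_subset_image: "collision_values g V \<subseteq> g ` V"
  unfolding collision_values_def by blast

lemma card_le_card_image_add_card_collision_values:
  assumes "finite V" and fibre_le_2: "\<And>w. card {a \<in> V. g a = w} \<le> 2"
  shows "card V \<le> card (g ` V) + card (collision_values g V)"
proof -
  let ?C = "collision_values g V"
  have fibre_le: "card {a \<in> V. g a = w} \<le> 1 + of_bool (w \<in> ?C)" for w
  proof (cases "w \<in> ?C")
    case True
    then show ?thesis using fibre_le_2[of w] by simp
  next
    case False
    then have "\<forall>a\<in>{a \<in> V. g a = w}. \<forall>b\<in>{a \<in> V. g a = w}. a = b"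
      unfolding collision_values_def by blast
    then show ?thesis using \<open>finite V\<close> False by (simp add: card_le_Suc0_iff_eq)
  qed
  have "card V = (\<Sum>w\<in>g ` V. card {a \<in> V. g a = w})"
    unfolding card_eq_sum using \<open>finite V\<close> by (rule sum.image_gen)
  also have "\<dots> \<le> (\<Sum>w\<in>g ` V. 1 + of_bool (w \<in> ?C))"
    by (rule sum_mono) (rule fibre_le)
  also have "\<dots> = card (g ` V) + card (g ` V \<inter> ?C)"
    using \<open>finite V\<close> by (simp only: sum.distrib sum_of_bool_eq card_eq_sum finite_imageI) simp
  also have "\<dots> = card (g ` V) + card ?C"
    using collision_values_subset_image[of g V] by (simp add: Int_absorb1)
  finally show ?thesis .
qed

lemma obtain_three_distinct:
  assumes "3 \<le> card F"
  obtains a b c where "a \<in> F" "b \<in> F" "c \<in> F" "a \<noteq> b" "b \<noteq> c" "a \<noteq> c"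
proof -
  from assms obtain a B where "F = insert a B" "a \<notin> B" "2 \<le> card B"
    using card_le_Suc_iff[of 2 F] by (auto simp: numeral_eq_Suc)
  moreover from \<open>2 \<le> card B\<close> obtain b c where "b \<in> B" "c \<in> B" "b \<noteq> c"
    using card_le_Suc_iff[of 1 B] by (auto simp: numeral_eq_Suc card_le_Suc_iff)
  ultimately show ?thesis using that by blast
qed

lemma card_lt_card_insert_Suc_Max_pred_image:
  fixes D :: "nat set"
  assumes "finite D" "D \<noteq> {}" "0 \<notin> D"
  shows "card D < card (insert (Max D + 1) ((\<lambda>w. w - 1) ` D))"
proof -
  have "inj_on (\<lambda>w. w - 1) D"
    using \<open>0 \<notin> D\<close> by (intro inj_onI) (metis diff_0_eq_0 diff_Suc_1 not0_implies_Suc)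
  moreover have "Max D + 1 \<notin> (\<lambda>w. w - 1) ` D"
    using Max_ge[OF \<open>finite D\<close>] by fastforce
  ultimately show ?thesis
    using \<open>finite D\<close> by (simp add: card_image)
qed

locale triangle_free_compl_endo =
  fixes k :: nat and E :: "nat \<Rightarrow> nat \<Rightarrow> bool" and g :: "nat \<Rightarrow> nat"
  assumes hom: "is_hom {1..k} (compl_adj k E) {1..k} (compl_adj k E) g"
    and sym: "\<And>a b. E a b \<Longrightarrow> E b a"
    and irrefl: "\<And>a. \<not> E a a"
    and triangle_free: "\<And>a b c. E a b \<Longrightarrow> E b c \<Longrightarrow> E a c \<Longrightarrow> False"
begin

lemma image_subset: "g ` {1..k} \<subseteq> {1..k}"
  using hom unfolding is_hom_def by blast

lemma compl_adj_image:
  "x \<in> {1..k} \<Longrightarrow> y \<in> {1..k} \<Longrightarrow> x \<noteq> y \<Longrightarrow> \<not> E x y \<Longrightarrow> g x \<noteq> g y \<and> \<not> E (g x) (g y)"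
  using hom unfolding is_hom_def compl_adj_def by blast

lemma fibre_adj: "x \<in> {1..k} \<Longrightarrow> y \<in> {1..k} \<Longrightarrow> x \<noteq> y \<Longrightarrow> g x = g y \<Longrightarrow> E x y"
  using compl_adj_image by blast

lemma card_fibre_le_2: "card {a \<in> {1..k}. g a = w} \<le> 2"
proof (rule ccontr)
  assume "\<not> ?thesis"
  then have "3 \<le> card {a \<in> {1..k}. g a = w}" by simp
  then obtain a b c where "a \<in> {a \<in> {1..k}. g a = w}" "b \<in> {a \<in> {1..k}. g a = w}"
    "c \<in> {a \<in> {1..k}. g a = w}" "a \<noteq> b" "b \<noteq> c" "a \<noteq> c"
    by (rule obtain_three_distinct)
  then have "E a b" "E b c" "E a c"
    using fibre_adj by auto
  then show False by (rule triangle_free)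
qed

lemma card_missed_le_card_collision_values:
  "card ({1..k} - g ` {1..k}) \<le> card (collision_values g {1..k})"
  using card_le_card_image_add_card_collision_values[of "{1..k}" g, OF _ card_fibre_le_2]
    image_subset by (simp add: card_Diff_subset)

lemma neighbour_of_collision_value_not_in_image:
  assumes w: "w \<in> collision_values g {1..k}" and "E w w'"
  shows "w' \<notin> g ` {1..k}"
proof
  assume "w' \<in> g ` {1..k}"
  then obtain c where c: "c \<in> {1..k}" "g c = w'" by blast
  obtain a b where ab: "a \<in> {1..k}" "b \<in> {1..k}" "a \<noteq> b" "g a = w" "g b = w"
    using w unfolding collision_values_def by blast
  have "w \<noteq> w'" using \<open>E w w'\<close> irrefl by blast
  have "E c x" if "x \<in> {a, b}" for x
  proof (rule ccontr)
    assume "\<not> E c x"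
    have "x \<in> {1..k}" "g x = w" using that ab by auto
    moreover have "c \<noteq> x" using \<open>g x = w\<close> c \<open>w \<noteq> w'\<close> by blast
    ultimately have "\<not> E w' w" using compl_adj_image[of c x] c \<open>\<not> E c x\<close> by simp
    then show False using \<open>E w w'\<close> sym by blast
  qed
  then have "E a c" "E c b" by (auto intro: sym)
  then show False
    using triangle_free fibre_adj[OF ab(1-3)] ab by metis
qed

lemma collision_value_at_end:
  assumes path: "\<And>i j. path_adj k i j \<Longrightarrow> E i j" and not_surj: "g ` {1..k} \<noteq> {1..k}"
  shows "\<exists>x\<in>{1..k}. \<exists>y\<in>{1..k}. x \<noteq> y \<and> g x = g y \<and> g x \<in> {1, k}"
proof (rule ccontr)
  assume no_end: "\<not> ?thesis"
  define C where "C = collision_values g {1..k}"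
  define M where "M = {1..k} - g ` {1..k}"
  have C_interior: "C \<subseteq> {2..k - 1}"
    using no_end image_subset unfolding C_def collision_values_def by fastforce
  have "finite M" "M \<noteq> {}"
    using not_surj image_subset unfolding M_def by auto
  then have "C \<noteq> {}"
    using card_missed_le_card_collision_values unfolding M_def C_def by fastforce
  have "finite C" using C_interior finite_subset by blast
  have "Max C \<in> C" using \<open>finite C\<close> \<open>C \<noteq> {}\<close> by simp
  have neighbours_missed: "insert (Max C + 1) ((\<lambda>w. w - 1) ` C) \<subseteq> M"
  proof -
    have "w + 1 \<in> M \<and> w - 1 \<in> M" if "w \<in> C" for w
    proof -
      have "w \<in> {2..k - 1}" using that C_interior by blast
      then have "2 \<le> w" "w + 1 \<le> k" by auto
      then have "path_adj k w (w + 1)" "path_adj k w (w - 1)" unfolding path_adj_def by auto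
      then have "E w (w + 1)" "E w (w - 1)" using path by blast+
      then show ?thesis
        using neighbour_of_collision_value_not_in_image \<open>w \<in> C\<close> \<open>2 \<le> w\<close> \<open>w + 1 \<le> k\<close>
        unfolding M_def C_def by auto
    qed
    then show ?thesis using \<open>Max C \<in> C\<close> by blast
  qed
  have "0 \<notin> C" using C_interior by auto
  have "card C < card (insert (Max C + 1) ((\<lambda>w. w - 1) ` C))"
    by (rule card_lt_card_insert_Suc_Max_pred_image) fact+
  also have "\<dots> \<le> card M"
    using neighbours_missed \<open>finite M\<close> by (rule card_mono[rotated])
  finally show False
    using card_missed_le_card_collision_values unfolding M_def C_def by simp
qed

end

lemma triangle_free_compl_endo_path:
  "is_hom {1..k} (compl_adj k (path_adj k)) {1..k} (compl_adj k (path_adj k)) g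
   \<Longrightarrow> triangle_free_compl_endo k (path_adj k) g"
  by unfold_locales (auto simp: path_adj_def)

lemma triangle_free_compl_endo_cycle:
  "k \<ge> 4 \<Longrightarrow> is_hom {1..k} (compl_adj k (cycle_adj k)) {1..k} (compl_adj k (cycle_adj k)) g
   \<Longrightarrow> triangle_free_compl_endo k (cycle_adj k) g"
  by unfold_locales (auto simp: cycle_adj_def path_adj_def)

theorem lemma12:
  shows "(\<forall>k g. k \<ge> 4 \<and> even k
            \<and> is_hom {1..k} (compl_adj k (cycle_adj k)) {1..k} (compl_adj k (cycle_adj k)) g
            \<and> g ` {1..k} \<noteq> {1..k}
          \<longrightarrow> (\<exists>x\<in>{1..k}. \<exists>y\<in>{1..k}. x \<noteq> y \<and> g x = g y \<and> g x \<in> {1, k}))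
       \<and> (\<forall>k g. k \<ge> 4
            \<and> is_hom {1..k} (compl_adj k (path_adj k)) {1..k} (compl_adj k (path_adj k)) g
            \<and> g ` {1..k} \<noteq> {1..k}
          \<longrightarrow> (\<exists>x\<in>{1..k}. \<exists>y\<in>{1..k}. x \<noteq> y \<and> g x = g y \<and> g x \<in> {1, k}))"
proof (intro conjI allI impI; elim conjE)
  fix k g
  assume "k \<ge> 4" and hom: "is_hom {1..k} (compl_adj k (cycle_adj k)) {1..k} (compl_adj k (cycle_adj k)) g"
    and not_surj: "g ` {1..k} \<noteq> {1..k}"
  from \<open>k \<ge> 4\<close> hom have "triangle_free_compl_endo k (cycle_adj k) g"
    by (rule triangle_free_compl_endo_cycle)
  then show "\<exists>x\<in>{1..k}. \<exists>y\<in>{1..k}. x \<noteq> y \<and> g x = g y \<and> g x \<in> {1, k}"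
    by (rule triangle_free_compl_endo.collision_value_at_end[OF _ _ not_surj]) (simp add: cycle_adj_def)
next
  fix k g
  assume hom: "is_hom {1..k} (compl_adj k (path_adj k)) {1..k} (compl_adj k (path_adj k)) g"
    and not_surj: "g ` {1..k} \<noteq> {1..k}"
  from hom have "triangle_free_compl_endo k (path_adj k) g"
    by (rule triangle_free_compl_endo_path)
  then show "\<exists>x\<in>{1..k}. \<exists>y\<in>{1..k}. x \<noteq> y \<and> g x = g y \<and> g x \<in> {1, k}"
    by (rule triangle_free_compl_endo.collision_value_at_end[OF _ _ not_surj])
qed

end
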